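(* Let $\mathfrak{H}$ be a Euclidean space and let $(\mathcal{X},\mathsf{S},\gamma,(\Lambda_{a})_{a\in\mathcal{A}})$ be a spectral decomposition system for $\mathfrak{H}$ such that the set $\{\Lambda_a\}_{a\in\mathcal{A}}$ is closed in $\mathscr{L}(\mathcal{X},\mathfrak{H})$. Let $D$ be a nonempty $\mathsf{S}$-invariant subset of $\mathcal{X}$ and let $X\in\mathfrak{H}$. Then \[ \operatorname{cone}\bigl(X-\operatorname{Proj}_{\gamma^{-1}(D)}X\bigr)=\bigl\{\Lambda_a y : y\in\operatorname{cone}\bigl(\gamma(X)-\operatorname{Proj}_D\gamma(X)\bigr)\ \text{and}\ a\in\mathcal{A}_X\bigr\}. \]
   Context: A Euclidean space is a finite-dimensional real Hilbert space; $\mathscr{L}(\mathcal{X},\mathfrak{H})$ carries the operator-norm topology. A spectral decomposition system for a Euclidean space $\mathfrak{H}$ is a tuple $(\mathcal{X},\mathsf{S},\gamma,(\Lambda_a)_{a\in\mathcal{A}})$ where $\mathcal{X}$ is a Euclidean space, $\mathsf{S}$ is a group acting on $\mathcal{X}$ such that each map $x\mapsto \mathsf{s}\cdot x$ is a linear isometry, $\gamma\colon\mathfrak{H}\to\mathcal{X}$ is a mapping, and each $\Lambda_a\colon\mathcal{X}\to\mathfrak{H}$ is a linear isometry, such that: [A] there exists a mapping $\tau\colon\mathcal{X}\to\mathcal{X}$ with $\tau(\mathsf{s}\cdot x)=\tau(x)$ for all $\mathsf{s},x$, $\tau(x)\in\mathsf{S}\cdot x$ for all $x$, and $\gamma\circ\Lambda_a=\tau$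 for all $a\in\mathcal{A}$; [B] for every $X\in\mathfrak{H}$ there exists $a\in\mathcal{A}$ with $X=\Lambda_a\gamma(X)$; [C] $\langle X,Y\rangle\le\langle\gamma(X),\gamma(Y)\rangle$ for all $X,Y\in\mathfrak{H}$. $\mathcal{A}_X=\{a\in\mathcal{A}:X=\Lambda_a\gamma(X)\}$. A set $D\subset\mathcal{X}$ is $\mathsf{S}$-invariant if $\mathsf{s}\cdot x\in D$ for all $x\in D$, $\mathsf{s}\in\mathsf{S}$. For a nonempty subset $C$ of a Euclidean space $\mathcal{H}$ and $x\in\mathcal{H}$, $\operatorname{Proj}_C x=\{y\in C:\|x-y\|=\inf_{z\in C}\|x-z\|\}$ (possibly empty). For a set $E$, $\operatorname{cone}E=\bigcup_{\alpha>0}\alpha E$, and $x-E=\{x-e:e\in E\}$. *)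

theory Defs
  imports "HOL-Analysis.Analysis" "HOL-Algebra.Group_Action"
begin

definition lin_isometry :: "('a::real_normed_vector \<Rightarrow> 'b::real_normed_vector) \<Rightarrow> bool" where
  "lin_isometry f \<longleftrightarrow> linear f \<and> (\<forall>x. norm (f x) = norm x)"

text \<open>Spectral decomposition system for the Euclidean space 'h.
  The group S is an abstract group G (HOL-Algebra) acting on 'x via phi.\<close>
definition spectral_decomposition_system ::
  "('g, 'c) monoid_scheme \<Rightarrow> ('g \<Rightarrow> 'x::euclidean_space \<Rightarrow> 'x) \<Rightarrow> ('h::euclidean_space \<Rightarrow> 'x)
   \<Rightarrow> 'a set \<Rightarrow> ('a \<Rightarrow> 'x \<Rightarrow> 'h) \<Rightarrow> bool" where
  "spectral_decomposition_system G \<phi> \<gamma> A \<Lambda> \<longleftrightarrow>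
     group_action G UNIV \<phi> \<and>
     (\<forall>s\<in>carrier G. lin_isometry (\<phi> s)) \<and>
     (\<forall>a\<in>A. lin_isometry (\<Lambda> a)) \<and>
     (\<exists>\<tau>::'x \<Rightarrow> 'x.
        (\<forall>s\<in>carrier G. \<forall>x. \<tau> (\<phi> s x) = \<tau> x) \<and>
        (\<forall>x. \<tau> x \<in> {\<phi> s x | s. s \<in> carrier G}) \<and>
        (\<forall>a\<in>A. \<gamma> \<circ> \<Lambda> a = \<tau>)) \<and>
     (\<forall>X. \<exists>a\<in>A. X = \<Lambda> a (\<gamma> X)) \<and>
     (\<forall>X Y. inner X Y \<le> inner (\<gamma> X) (\<gamma> Y))"

definition invariant_set :: "('g, 'c) monoid_scheme \<Rightarrow> ('g \<Rightarrow> 'x \<Rightarrow> 'x) \<Rightarrow> 'x set \<Rightarrow> bool" where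
  "invariant_set G \<phi> D \<longleftrightarrow> (\<forall>x\<in>D. \<forall>s\<in>carrier G. \<phi> s x \<in> D)"

definition adapted_indices :: "'a set \<Rightarrow> ('a \<Rightarrow> 'x \<Rightarrow> 'h) \<Rightarrow> ('h \<Rightarrow> 'x) \<Rightarrow> 'h \<Rightarrow> 'a set" where
  "adapted_indices A \<Lambda> \<gamma> X = {a \<in> A. X = \<Lambda> a (\<gamma> X)}"

text \<open>Set-valued projection (possibly empty).\<close>
definition proj_set :: "'a::real_normed_vector set \<Rightarrow> 'a \<Rightarrow> 'a set" where
  "proj_set C x = {y \<in> C. norm (x - y) = (INF z\<in>C. norm (x - z))}"

text \<open>cone E = union over alpha > 0 of alpha E (named pos_cone to avoid the library predicate cone).\<close>
definition pos_cone :: "'a::real_vector set \<Rightarrow> 'a set" where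
  "pos_cone E = {\<alpha> *\<^sub>R e | \<alpha> e. \<alpha> > 0 \<and> e \<in> E}"

end

theory Submission
  imports Defs
begin

text \<open>
  Since every \<open>\<Lambda> a\<close> is an isometry and \<open>\<gamma> \<circ> \<Lambda> a\<close> does not depend on \<open>a\<close>, property [C] makes \<open>\<gamma>\<close>
  nonexpansive, while \<open>\<Lambda> a\<close> with \<open>a \<in> \<A>\<^sub>X\<close> maps \<open>D\<close> into \<open>\<gamma>\<^sup>-\<^sup>1(D)\<close> (by \<open>\<S>\<close>-invariance) and
  \<open>\<gamma> X - D\<close> isometrically onto \<open>X - \<Lambda> a D\<close>. Hence the distances of \<open>X\<close> to \<open>\<gamma>\<^sup>-\<^sup>1(D)\<close> and of
  \<open>\<gamma> X\<close> to \<open>D\<close> coincide. A nearest point \<open>Y\<close> of \<open>\<gamma>\<^sup>-\<^sup>1(D)\<close> then satisfies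
  \<open>\<parallel>\<gamma> X - \<gamma> Y\<parallel> = \<parallel>X - Y\<parallel>\<close>, i.e. equality in [C], which forces a simultaneous decomposition
  \<open>X = \<Lambda> a (\<gamma> X)\<close>, \<open>Y = \<Lambda> a (\<gamma> Y)\<close>. So \<open>Proj\<^bsub>\<gamma>\<^sup>-\<^sup>1(D)\<^esub> X\<close> consists of the points \<open>\<Lambda> a y\<close> with
  \<open>a \<in> \<A>\<^sub>X\<close> and \<open>y \<in> Proj\<^bsub>D\<^esub> (\<gamma> X)\<close>, and the linear maps \<open>\<Lambda> a\<close> commute with taking cones.
\<close>

lemma lin_isometry_inner:
  fixes f :: "'a::real_inner \<Rightarrow> 'b::real_inner"
  assumes "lin_isometry f"
  shows "inner (f x) (f y) = inner x y"
proof -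
  have "linear f" and "\<And>x. norm (f x) = norm x"
    using assms unfolding lin_isometry_def by auto
  then show ?thesis
    by (simp add: dot_norm[of "f x"] dot_norm[of x] linear_add[symmetric])
qed

lemma proj_set_eq_infdist: "proj_set C x = {y \<in> C. dist x y = infdist x C}"
  by (cases "C = {}") (auto simp: proj_set_def infdist_notempty dist_norm)

lemma pos_cone_linear_image:
  assumes "linear f"
  shows "pos_cone (f ` E) = f ` pos_cone E"
  unfolding pos_cone_def by (force simp: linear_scale[OF assms] image_iff)

lemma inner_self_nonpos_iff: "inner x x \<le> 0 \<longleftrightarrow> x = 0"
  using inner_gt_zero_iff[of x] by (auto simp del: inner_gt_zero_iff)

lemma pos_cone_UN: "pos_cone (\<Union>i\<in>I. E i) = (\<Union>i\<in>I. pos_cone (E i))"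
  unfolding pos_cone_def by blast

locale spectral_decomposition =
  fixes \<gamma> :: "'h::euclidean_space \<Rightarrow> 'x::euclidean_space" and A :: "'a set"
    and \<Lambda> :: "'a \<Rightarrow> 'x \<Rightarrow> 'h" and \<tau> :: "'x \<Rightarrow> 'x"
  assumes lin_isometry_\<Lambda>: "a \<in> A \<Longrightarrow> lin_isometry (\<Lambda> a)"
    and \<gamma>_\<Lambda>: "a \<in> A \<Longrightarrow> \<gamma> (\<Lambda> a x) = \<tau> x"
    and decomposition: "\<exists>a\<in>A. X = \<Lambda> a (\<gamma> X)"
    and inner_le_inner_\<gamma>: "inner X Y \<le> inner (\<gamma> X) (\<gamma> Y)"
begin

lemma linear_\<Lambda>: "a \<in> A \<Longrightarrow> linear (\<Lambda> a)"
  using lin_isometry_\<Lambda> lin_isometry_def by blast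

lemma norm_\<Lambda>: "a \<in> A \<Longrightarrow> norm (\<Lambda> a x) = norm x"
  using lin_isometry_\<Lambda> lin_isometry_def by blast

lemma inner_\<Lambda>: "a \<in> A \<Longrightarrow> inner (\<Lambda> a x) (\<Lambda> a y) = inner x y"
  using lin_isometry_\<Lambda> lin_isometry_inner by blast

lemma diff_\<Lambda>: "a \<in> A \<Longrightarrow> \<Lambda> a x - \<Lambda> a y = \<Lambda> a (x - y)"
  using linear_\<Lambda> linear_diff by metis

lemma \<tau>_\<gamma>: "\<tau> (\<gamma> X) = \<gamma> X"
  using decomposition[of X] \<gamma>_\<Lambda> by metis

lemma \<gamma>_\<Lambda>_\<gamma>: "a \<in> A \<Longrightarrow> \<gamma> (\<Lambda> a (\<gamma> Y)) = \<gamma> Y"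
  by (simp add: \<gamma>_\<Lambda> \<tau>_\<gamma>)

lemma norm_\<gamma>: "norm (\<gamma> X) = norm X"
  using decomposition[of X] norm_\<Lambda> by metis

lemma inner_self_\<gamma>: "inner (\<gamma> X) (\<gamma> X) = inner X X"
  by (metis norm_\<gamma> power2_norm_eq_inner)

lemma inner_diff_self_\<gamma>:
  "inner (\<gamma> X - \<gamma> Y) (\<gamma> X - \<gamma> Y) = inner (X - Y) (X - Y) - 2 * (inner (\<gamma> X) (\<gamma> Y) - inner X Y)"
  using inner_self_\<gamma>[of X] inner_self_\<gamma>[of Y]
  by (simp add: inner_diff_left inner_diff_right inner_commute)

lemma dist_\<gamma>_le: "dist (\<gamma> X) (\<gamma> Y) \<le> dist X Y"
proof -
  have "(norm (\<gamma> X - \<gamma> Y))\<^sup>2 \<le> (norm (X - Y))\<^sup>2"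
    using inner_diff_self_\<gamma>[of X Y] inner_le_inner_\<gamma>[of X Y] by (simp add: power2_norm_eq_inner)
  then show ?thesis
    unfolding dist_norm by (rule power2_le_imp_le) simp
qed

lemma dist_\<gamma>_eq_iff: "dist (\<gamma> X) (\<gamma> Y) = dist X Y \<longleftrightarrow> inner (\<gamma> X) (\<gamma> Y) = inner X Y"
proof -
  have "dist (\<gamma> X) (\<gamma> Y) = dist X Y \<longleftrightarrow> (norm (\<gamma> X - \<gamma> Y))\<^sup>2 = (norm (X - Y))\<^sup>2"
    unfolding dist_norm by (simp add: power2_eq_iff_nonneg)
  also have "\<dots> \<longleftrightarrow> inner (\<gamma> X) (\<gamma> Y) = inner X Y"
    using inner_diff_self_\<gamma>[of X Y] by (auto simp: power2_norm_eq_inner)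
  finally show ?thesis .
qed

lemma simultaneous_decomposition:
  assumes "inner X Y = inner (\<gamma> X) (\<gamma> Y)"
  obtains a where "a \<in> A" "X = \<Lambda> a (\<gamma> X)" "Y = \<Lambda> a (\<gamma> Y)"
proof -
  obtain a where a: "a \<in> A" and XY: "X + Y = \<Lambda> a (\<gamma> (X + Y))"
    using decomposition by blast
  define g where "g = \<gamma> (X + Y)"
  define s where "s = \<gamma> X + \<gamma> Y"
  txt \<open>\<open>g\<close> and \<open>s\<close> have the same norm as \<open>X + Y\<close>, and [C] gives \<open>\<langle>g, s\<rangle> \<ge> \<parallel>X + Y\<parallel>\<^sup>2\<close>, so \<open>g = s\<close>.\<close>
  have "inner g g = inner (X + Y) (X + Y)"
    unfolding g_def by (rule inner_self_\<gamma>)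
  moreover have "inner s s = inner (X + Y) (X + Y)"
    unfolding s_def using assms inner_self_\<gamma>[of X] inner_self_\<gamma>[of Y]
    by (simp add: inner_add_left inner_add_right inner_commute)
  moreover have "inner (X + Y) (X + Y) \<le> inner g s"
    using inner_le_inner_\<gamma>[of "X + Y" X] inner_le_inner_\<gamma>[of "X + Y" Y]
    unfolding g_def s_def by (simp add: inner_add_right)
  ultimately have "inner (g - s) (g - s) \<le> 0"
    by (simp add: inner_diff_left inner_diff_right inner_commute)
  then have "g = s"
    by (simp add: inner_self_nonpos_iff)
  define U where "U = \<Lambda> a (\<gamma> X)"
  define V where "V = \<Lambda> a (\<gamma> Y)"
  have "X + Y = U + V"
    using XY \<open>g = s\<close> linear_add[OF linear_\<Lambda>[OF a]] unfolding g_def s_def U_def V_def by simp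
  then have VY: "V - Y = X - U"
    by (simp add: algebra_simps)
  txt \<open>Applying [C] to the pairs \<open>(X, V)\<close> and \<open>(U, Y)\<close> makes \<open>\<parallel>X - U\<parallel>\<^sup>2 = \<langle>X - U, V - Y\<rangle>\<close> nonpositive.\<close>
  have "inner X V \<le> inner (\<gamma> X) (\<gamma> Y)" "inner U Y \<le> inner (\<gamma> X) (\<gamma> Y)"
    using inner_le_inner_\<gamma>[of X V] inner_le_inner_\<gamma>[of U Y] \<gamma>_\<Lambda>_\<gamma>[OF a]
    unfolding U_def V_def by simp_all
  moreover have "inner U V = inner (\<gamma> X) (\<gamma> Y)"
    unfolding U_def V_def using inner_\<Lambda>[OF a] .
  moreover have "inner (X - U) (X - U) = inner X V - inner X Y - inner U V + inner U Y"
    by (subst (2) VY[symmetric]) (simp add: inner_diff_left inner_diff_right)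
  ultimately have "inner (X - U) (X - U) \<le> 0"
    using assms by linarith
  then have "X = U"
    by (simp add: inner_self_nonpos_iff)
  with VY have "Y = V"
    by simp
  with \<open>X = U\<close> a show thesis
    using that unfolding U_def V_def by blast
qed

lemma infdist_preimage:
  assumes "\<tau> ` D \<subseteq> D"
  shows "infdist X (\<gamma> -` D) = infdist (\<gamma> X) D"
proof (cases "D = {}")
  case False
  obtain a0 where a0: "a0 \<in> A" "X = \<Lambda> a0 (\<gamma> X)"
    using decomposition by blast
  have \<Lambda>_preimage: "\<Lambda> a0 z \<in> \<gamma> -` D" if "z \<in> D" for z
    using assms that \<gamma>_\<Lambda>[OF a0(1)] by auto
  then have "\<gamma> -` D \<noteq> {}"
    using False by blast
  have "infdist (\<gamma> X) D \<le> infdist X (\<gamma> -` D)"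
    unfolding infdist_notempty[OF \<open>\<gamma> -` D \<noteq> {}\<close>]
    by (rule cINF_greatest[OF \<open>\<gamma> -` D \<noteq> {}\<close>]) (auto intro: infdist_le2 dist_\<gamma>_le)
  moreover have "infdist X (\<gamma> -` D) \<le> infdist (\<gamma> X) D"
    unfolding infdist_notempty[OF False]
  proof (rule cINF_greatest[OF False])
    fix z
    assume "z \<in> D"
    have "dist X (\<Lambda> a0 z) = dist (\<gamma> X) z"
      using a0 by (metis dist_norm diff_\<Lambda> norm_\<Lambda>)
    then show "infdist X (\<gamma> -` D) \<le> dist (\<gamma> X) z"
      using infdist_le[OF \<Lambda>_preimage[OF \<open>z \<in> D\<close>], of X] by simp
  qed
  ultimately show ?thesis
    by simp
qed (simp add: infdist_def)

lemma proj_set_preimage: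
  assumes "\<tau> ` D \<subseteq> D"
  shows "proj_set (\<gamma> -` D) X = (\<Union>a\<in>adapted_indices A \<Lambda> \<gamma> X. \<Lambda> a ` proj_set D (\<gamma> X))"
proof (intro equalityI subsetI)
  fix Y
  assume "Y \<in> proj_set (\<gamma> -` D) X"
  then have Y: "\<gamma> Y \<in> D" "dist X Y = infdist (\<gamma> X) D"
    using infdist_preimage[OF assms] by (auto simp: proj_set_eq_infdist)
  then have "dist (\<gamma> X) (\<gamma> Y) = dist X Y"
    using dist_\<gamma>_le[of X Y] infdist_le[OF Y(1), of "\<gamma> X"] by simp
  then obtain a where "a \<in> A" "X = \<Lambda> a (\<gamma> X)" "Y = \<Lambda> a (\<gamma> Y)"
    using simultaneous_decomposition dist_\<gamma>_eq_iff by metis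
  moreover have "\<gamma> Y \<in> proj_set D (\<gamma> X)"
    using Y \<open>dist (\<gamma> X) (\<gamma> Y) = dist X Y\<close> by (simp add: proj_set_eq_infdist)
  ultimately show "Y \<in> (\<Union>a\<in>adapted_indices A \<Lambda> \<gamma> X. \<Lambda> a ` proj_set D (\<gamma> X))"
    unfolding adapted_indices_def by blast
next
  fix Y
  assume "Y \<in> (\<Union>a\<in>adapted_indices A \<Lambda> \<gamma> X. \<Lambda> a ` proj_set D (\<gamma> X))"
  then obtain a y where a: "a \<in> A" "X = \<Lambda> a (\<gamma> X)" and Y: "Y = \<Lambda> a y"
    and y: "y \<in> D" "dist (\<gamma> X) y = infdist (\<gamma> X) D"
    unfolding adapted_indices_def proj_set_eq_infdist by blast
  have "dist X Y = dist (\<gamma> X) y"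
    using a Y by (metis dist_norm diff_\<Lambda> norm_\<Lambda>)
  moreover have "\<gamma> Y \<in> D"
    using assms y(1) Y \<gamma>_\<Lambda>[OF a(1)] by auto
  ultimately show "Y \<in> proj_set (\<gamma> -` D) X"
    using y(2) infdist_preimage[OF assms] by (simp add: proj_set_eq_infdist)
qed

lemma diff_proj_set_preimage:
  assumes "\<tau> ` D \<subseteq> D"
  shows "(\<lambda>Y. X - Y) ` proj_set (\<gamma> -` D) X =
    (\<Union>a\<in>adapted_indices A \<Lambda> \<gamma> X. \<Lambda> a ` (\<lambda>z. \<gamma> X - z) ` proj_set D (\<gamma> X))"
proof -
  have "X - \<Lambda> a y = \<Lambda> a (\<gamma> X - y)" if "a \<in> adapted_indices A \<Lambda> \<gamma> X" for a y
    using that diff_\<Lambda>[of a "\<gamma> X" y] unfolding adapted_indices_def by auto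
  then show ?thesis
    unfolding proj_set_preimage[OF assms] image_UN image_image by (intro SUP_cong image_cong) auto
qed

end

lemma spectral_decomposition_systemE:
  assumes "spectral_decomposition_system G \<phi> \<gamma> A \<Lambda>" and "invariant_set G \<phi> D"
  obtains \<tau> where "spectral_decomposition \<gamma> A \<Lambda> \<tau>" and "\<tau> ` D \<subseteq> D"
proof -
  obtain \<tau> where orbit: "\<forall>x. \<tau> x \<in> {\<phi> s x | s. s \<in> carrier G}"
    and "\<forall>a\<in>A. \<gamma> \<circ> \<Lambda> a = \<tau>"
    using assms(1) unfolding spectral_decomposition_system_def by blast
  then have "spectral_decomposition \<gamma> A \<Lambda> \<tau>"
    using assms(1) unfolding spectral_decomposition_system_def
    by unfold_locales (auto simp: fun_eq_iff)
  moreover have "\<tau> x \<in> D" if "x \<in> D" for x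
  proof -
    obtain s where "s \<in> carrier G" "\<tau> x = \<phi> s x"
      using orbit by blast
    then show ?thesis
      using assms(2) that unfolding invariant_set_def by simp
  qed
  ultimately show thesis
    using that by blast
qed

theorem proposition3p3:
  fixes G :: "('g, 'c) monoid_scheme" and \<phi> :: "'g \<Rightarrow> 'x::euclidean_space \<Rightarrow> 'x"
    and \<gamma> :: "'h::euclidean_space \<Rightarrow> 'x" and A :: "'a set" and \<Lambda> :: "'a \<Rightarrow> 'x \<Rightarrow> 'h"
    and D :: "'x set" and X :: 'h
  assumes sds: "spectral_decomposition_system G \<phi> \<gamma> A \<Lambda>"
    and closed: "closed ((\<lambda>a. Blinfun (\<Lambda> a)) ` A)"
    and nonempty: "D \<noteq> {}"
    and inv: "invariant_set G \<phi> D"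
  shows "pos_cone ((\<lambda>Y. X - Y) ` proj_set (\<gamma> -` D) X) =
         {\<Lambda> a y | a y. y \<in> pos_cone ((\<lambda>z. \<gamma> X - z) ` proj_set D (\<gamma> X)) \<and> a \<in> adapted_indices A \<Lambda> \<gamma> X}"
proof -
  obtain \<tau> where "spectral_decomposition \<gamma> A \<Lambda> \<tau>" and "\<tau> ` D \<subseteq> D"
    using spectral_decomposition_systemE[OF sds inv] .
  then interpret spectral_decomposition \<gamma> A \<Lambda> \<tau>
    by simp
  let ?E = "(\<lambda>z. \<gamma> X - z) ` proj_set D (\<gamma> X)"
  have "pos_cone ((\<lambda>Y. X - Y) ` proj_set (\<gamma> -` D) X) =
      (\<Union>a\<in>adapted_indices A \<Lambda> \<gamma> X. pos_cone (\<Lambda> a ` ?E))"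
    unfolding diff_proj_set_preimage[OF \<open>\<tau> ` D \<subseteq> D\<close>] pos_cone_UN ..
  also have "\<dots> = (\<Union>a\<in>adapted_indices A \<Lambda> \<gamma> X. \<Lambda> a ` pos_cone ?E)"
    using pos_cone_linear_image[OF linear_\<Lambda>] by (simp add: adapted_indices_def)
  finally show ?thesis
    by blast
qed

end
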